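(* Let $G$ be a graph such that for every edge $e$ of $G$, the induced subgraph $G[A(e)]$ is perfect. Then $\chi(G)\le\frac{\omega(G)^3-\omega(G)^2+2\omega(G)}{2}$.
   Context: All graphs are finite, simple and undirected. For an edge $e=uv$ of $G$, $A(e)$ denotes the set of vertices of $G$ adjacent to neither $u$ nor $v$. $G[S]$ is the subgraph induced by $S$. A graph $F$ is perfect if $\chi(F')=\omega(F')$ for every induced subgraph $F'$ of $F$. $\chi$ is the chromatic number and $\omega$ the clique number. *)

theory Defs
  imports Complex_Main
begin

definition graph :: "'a set \<Rightarrow> ('a \<Rightarrow> 'a \<Rightarrow> bool) \<Rightarrow> bool" where
  "graph V E \<longleftrightarrow> finite V \<and> (\<forall>u v. E u v \<longrightarrow> u \<in> V \<and> v \<in> V)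
     \<and> (\<forall>u v. E u v \<longrightarrow> E v u) \<and> (\<forall>u. \<not> E u u)"

text \<open>All notions below are relative to a vertex set S; the graph (S, E) restricted
  to S is the induced subgraph G[S].\<close>
definition is_clique :: "'a set \<Rightarrow> ('a \<Rightarrow> 'a \<Rightarrow> bool) \<Rightarrow> 'a set \<Rightarrow> bool" where
  "is_clique S E K \<longleftrightarrow> K \<subseteq> S \<and> (\<forall>u\<in>K. \<forall>v\<in>K. u \<noteq> v \<longrightarrow> E u v)"

definition clique_number :: "'a set \<Rightarrow> ('a \<Rightarrow> 'a \<Rightarrow> bool) \<Rightarrow> nat" where
  "clique_number S E = Max (card ` {K. is_clique S E K})"

definition proper_colouring :: "'a set \<Rightarrow> ('a \<Rightarrow> 'a \<Rightarrow> bool) \<Rightarrow> nat \<Rightarrow> ('a \<Rightarrow> nat) \<Rightarrow> bool" where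
  "proper_colouring S E k f \<longleftrightarrow> (\<forall>v\<in>S. f v < k) \<and> (\<forall>u\<in>S. \<forall>v\<in>S. E u v \<longrightarrow> f u \<noteq> f v)"

definition chromatic_number :: "'a set \<Rightarrow> ('a \<Rightarrow> 'a \<Rightarrow> bool) \<Rightarrow> nat" where
  "chromatic_number S E = (LEAST k. \<exists>f. proper_colouring S E k f)"

definition perfect :: "'a set \<Rightarrow> ('a \<Rightarrow> 'a \<Rightarrow> bool) \<Rightarrow> bool" where
  "perfect S E \<longleftrightarrow> (\<forall>T \<subseteq> S. chromatic_number T E = clique_number T E)"

text \<open>A(e) for e = uv: vertices adjacent to neither u nor v.\<close>
definition non_nbrs :: "'a set \<Rightarrow> ('a \<Rightarrow> 'a \<Rightarrow> bool) \<Rightarrow> 'a \<Rightarrow> 'a \<Rightarrow> 'a set" where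
  "non_nbrs V E u v = {w \<in> V. \<not> E w u \<and> \<not> E w v}"

end

theory Submission
  imports Defs
begin

text \<open>Fix a maximum clique \<open>K\<close>, so \<open>|K| = \<omega>\<close>. A vertex outside \<open>K\<close> that lies in no \<open>A(uv)\<close> with
  \<open>u, v \<in> K\<close> misses at most one vertex of \<open>K\<close>, and by maximality it misses exactly one, say \<open>x\<close>.
  Two such vertices missing the same \<open>x\<close> are non-adjacent, since together with \<open>K - {x}\<close> they would
  form a clique of size \<open>\<omega> + 1\<close>; so each class together with \<open>x\<close> is independent. The \<open>\<omega> choose 2\<close>
  perfect graphs \<open>G[A(uv)]\<close> need \<open>\<omega>\<close> colours each and the \<open>\<omega>\<close> independent classes one each, whence
  \<open>\<chi> \<le> \<omega> (\<omega> choose 2) + \<omega> = (\<omega>\<^sup>3 - \<omega>\<^sup>2 + 2\<omega>) / 2\<close>.\<close>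

definition colourable :: "'a set \<Rightarrow> ('a \<Rightarrow> 'a \<Rightarrow> bool) \<Rightarrow> nat \<Rightarrow> bool" where
  "colourable S E k \<longleftrightarrow> (\<exists>f. proper_colouring S E k f)"

lemma colourable_Un:
  assumes "colourable A E a" "colourable B E b"
  shows "colourable (A \<union> B) E (a + b)"
proof -
  obtain f g where f: "proper_colouring A E a f" and g: "proper_colouring B E b g"
    using assms unfolding colourable_def by blast
  have "proper_colouring (A \<union> B) E (a + b) (\<lambda>v. if v \<in> A then f v else a + g v)"
    using f g unfolding proper_colouring_def by (auto simp: trans_less_add1)
  then show ?thesis unfolding colourable_def by blast
qed

lemma colourable_subset:
  assumes "colourable T E k" "S \<subseteq> T" "k \<le> k'"
  shows "colourable S E k'"
proof -
  obtain f where "proper_colouring T E k f" using assms(1) unfolding colourable_def by blast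
  then have "proper_colouring S E k' f"
    using assms(2,3) unfolding proper_colouring_def by (meson less_le_trans subsetD)
  then show ?thesis unfolding colourable_def by blast
qed

lemma colourable_independent:
  assumes "\<forall>u\<in>S. \<forall>v\<in>S. \<not> E u v"
  shows "colourable S E 1"
  using assms unfolding colourable_def proper_colouring_def by auto

lemma colourable_UN:
  assumes "finite I" "\<And>i. i \<in> I \<Longrightarrow> colourable (S i) E (k i)"
  shows "colourable (\<Union> (S ` I)) E (\<Sum>i\<in>I. k i)"
  using assms
proof (induction I rule: finite_induct)
  case empty
  then show ?case unfolding colourable_def proper_colouring_def by simp
next
  case (insert i I)
  then show ?case using colourable_Un[of "S i" E "k i" "\<Union> (S ` I)"] by simp
qed

lemma colourable_card:
  assumes "finite S" "\<forall>u. \<not> E u u"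
  shows "colourable S E (card S)"
proof -
  have "colourable {v} E 1" for v
    using assms(2) by (intro colourable_independent) simp
  then have "colourable (\<Union>v\<in>S. {v}) E (\<Sum>v\<in>S. 1)"
    by (rule colourable_UN[OF assms(1)])
  then show ?thesis by simp
qed

lemma colourable_chromatic_number:
  assumes "finite S" "\<forall>u. \<not> E u u"
  shows "colourable S E (chromatic_number S E)"
  using colourable_card[of S E, OF assms] unfolding chromatic_number_def colourable_def
  by (rule LeastI)

lemma chromatic_number_le:
  assumes "colourable S E k"
  shows "chromatic_number S E \<le> k"
  using assms unfolding chromatic_number_def colourable_def by (rule Least_le)

lemma finite_cliques:
  assumes "finite S"
  shows "finite {K. is_clique S E K}"
  by (rule finite_subset[of _ "Pow S"]) (auto simp: is_clique_def assms)

lemma finite_clique: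
  assumes "finite S" "is_clique S E K"
  shows "finite K"
  using assms finite_subset unfolding is_clique_def by blast

lemma card_le_clique_number:
  assumes "finite S" "is_clique S E K"
  shows "card K \<le> clique_number S E"
  unfolding clique_number_def using assms finite_cliques[OF assms(1)] by (intro Max_ge) auto

lemma clique_number_attained:
  assumes "finite S"
  obtains K where "is_clique S E K" "card K = clique_number S E"
proof -
  have "is_clique S E {}" unfolding is_clique_def by simp
  then have "clique_number S E \<in> card ` {K. is_clique S E K}"
    unfolding clique_number_def using finite_cliques[OF assms] by (intro Max_in) auto
  then show ?thesis using that by auto
qed

lemma clique_number_mono:
  assumes "finite T" "S \<subseteq> T"
  shows "clique_number S E \<le> clique_number T E"
proof -
  obtain K where K: "is_clique S E K" "card K = clique_number S E"
    using clique_number_attained[OF finite_subset[OF assms(2,1)]] .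
  then have "is_clique T E K" using assms(2) unfolding is_clique_def by auto
  then show ?thesis using card_le_clique_number[OF assms(1)] K(2) by metis
qed

lemma colourable_perfect:
  assumes "finite S" "\<forall>u. \<not> E u u" "perfect S E"
  shows "colourable S E (clique_number S E)"
  using colourable_chromatic_number[of S E, OF assms(1,2)] assms(3) unfolding perfect_def by auto

definition common_non_nbrs :: "'a set \<Rightarrow> ('a \<Rightarrow> 'a \<Rightarrow> bool) \<Rightarrow> 'a set \<Rightarrow> 'a set" where
  "common_non_nbrs V E e = {w \<in> V. \<forall>y\<in>e. \<not> E w y}"

lemma common_non_nbrs_pair: "common_non_nbrs V E {u, v} = non_nbrs V E u v"
  unfolding common_non_nbrs_def non_nbrs_def by auto

definition missing_only :: "'a set \<Rightarrow> ('a \<Rightarrow> 'a \<Rightarrow> bool) \<Rightarrow> 'a set \<Rightarrow> 'a \<Rightarrow> 'a set" where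
  "missing_only V E K x = {y \<in> V - K. \<not> E y x \<and> (\<forall>z\<in>K - {x}. E y z)}"

lemma independent_insert_missing_only:
  assumes "graph V E" "is_clique V E K" "card K = clique_number V E" "x \<in> K"
  shows "\<forall>a\<in>insert x (missing_only V E K x). \<forall>b\<in>insert x (missing_only V E K x). \<not> E a b"
proof (intro ballI notI)
  fix a b assume a: "a \<in> insert x (missing_only V E K x)"
    and b: "b \<in> insert x (missing_only V E K x)" and "E a b"
  have fin: "finite V" and sym: "\<And>u v. E u v \<Longrightarrow> E v u" and irr: "\<And>u. \<not> E u u"
    using assms(1) unfolding graph_def by auto
  have finK: "finite K" using finite_clique[OF fin assms(2)] .
  show False
  proof (cases "a = x \<or> b = x")
    case True
    then show ?thesis using a b \<open>E a b\<close> sym irr unfolding missing_only_def by auto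
  next
    case False
    then have a': "a \<in> V - K" "\<forall>z\<in>K - {x}. E a z" and b': "b \<in> V - K" "\<forall>z\<in>K - {x}. E b z"
      using a b unfolding missing_only_def by auto
    have "a \<noteq> b" using \<open>E a b\<close> irr by auto
    have "is_clique V E (insert a (insert b (K - {x})))"
      using assms(2) a' b' \<open>E a b\<close> sym unfolding is_clique_def by auto
    then have "card (insert a (insert b (K - {x}))) \<le> card K"
      using card_le_clique_number[OF fin] assms(3) by metis
    then show False using a' b' \<open>a \<noteq> b\<close> finK assms(4) by (simp add: card_gt_0_iff)
  qed
qed

lemma vertices_covered:
  assumes "graph V E" "is_clique V E K" "card K = clique_number V E"
  shows "V \<subseteq> (\<Union>e\<in>{e. e \<subseteq> K \<and> card e = 2}. common_non_nbrs V E e)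
              \<union> (\<Union>x\<in>K. insert x (missing_only V E K x))"
    (is "_ \<subseteq> ?A \<union> ?B")
proof
  fix v assume "v \<in> V"
  have fin: "finite V" and sym: "\<And>u v. E u v \<Longrightarrow> E v u"
    using assms(1) unfolding graph_def by auto
  show "v \<in> ?A \<union> ?B"
  proof (cases "v \<in> ?A \<or> v \<in> K")
    case True
    then show ?thesis by blast
  next
    case False
    then have "v \<notin> K" by blast
    have adj_one: "E v y \<or> E v z" if "y \<in> K" "z \<in> K" "y \<noteq> z" for y z
    proof -
      have "{y, z} \<in> {e. e \<subseteq> K \<and> card e = 2}" using that by auto
      then have "v \<notin> common_non_nbrs V E {y, z}" using False by blast
      then show ?thesis using \<open>v \<in> V\<close> unfolding common_non_nbrs_def by blast
    qed
    have "\<not> is_clique V E (insert v K)"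
    proof
      assume "is_clique V E (insert v K)"
      then have "card (insert v K) \<le> card K"
        using card_le_clique_number[OF fin] assms(3) by metis
      moreover have "card (insert v K) = Suc (card K)"
        using \<open>v \<notin> K\<close> finite_clique[OF fin assms(2)] by simp
      ultimately show False by simp
    qed
    then obtain x where "x \<in> K" "\<not> E v x"
      using assms(2) \<open>v \<in> V\<close> sym unfolding is_clique_def by blast
    then have "v \<in> missing_only V E K x"
      using adj_one \<open>v \<in> V\<close> \<open>v \<notin> K\<close> unfolding missing_only_def by blast
    then show ?thesis using \<open>x \<in> K\<close> by blast
  qed
qed

lemma colourable_pair_non_nbrs:
  assumes "graph V E" "\<forall>u\<in>V. \<forall>v\<in>V. E u v \<longrightarrow> perfect (non_nbrs V E u v) E"
    and "is_clique V E K"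
  shows "colourable (\<Union>e\<in>{e. e \<subseteq> K \<and> card e = 2}. common_non_nbrs V E e) E
           ((card K choose 2) * clique_number V E)"
proof -
  have fin: "finite V" and irr: "\<forall>u. \<not> E u u"
    using assms(1) unfolding graph_def by auto
  have finK: "finite K" using finite_clique[OF fin assms(3)] .
  define P where "P = {e. e \<subseteq> K \<and> card e = 2}"
  have "finite P" unfolding P_def using finK by simp
  have "colourable (common_non_nbrs V E e) E (clique_number V E)" if "e \<in> P" for e
  proof -
    obtain u v where e: "e = {u, v}" "u \<noteq> v" "u \<in> K" "v \<in> K"
      using \<open>e \<in> P\<close> unfolding P_def card_2_iff by blast
    define A where "A = non_nbrs V E u v"
    have "A \<subseteq> V" unfolding A_def non_nbrs_def by blast
    have "perfect A E" using assms(2,3) e unfolding A_def is_clique_def by blast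
    then have "colourable A E (clique_number A E)"
      using finite_subset[OF \<open>A \<subseteq> V\<close> fin] irr by (rule colourable_perfect[rotated 2])
    then show ?thesis unfolding e(1) common_non_nbrs_pair A_def[symmetric]
      by (rule colourable_subset[OF _ order_refl clique_number_mono[OF fin \<open>A \<subseteq> V\<close>]])
  qed
  then have "colourable (\<Union>e\<in>P. common_non_nbrs V E e) E (\<Sum>e\<in>P. clique_number V E)"
    by (rule colourable_UN[OF \<open>finite P\<close>])
  moreover have "card P = card K choose 2" unfolding P_def using n_subsets[OF finK] by simp
  ultimately show ?thesis unfolding P_def by simp
qed

lemma colourable_missing_only_classes:
  assumes "graph V E" "is_clique V E K" "card K = clique_number V E"
  shows "colourable (\<Union>x\<in>K. insert x (missing_only V E K x)) E (card K)"
proof -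
  have "finite K" using assms(1,2) finite_clique unfolding graph_def by blast
  have "colourable (insert x (missing_only V E K x)) E 1" if "x \<in> K" for x
    using independent_insert_missing_only[OF assms that] by (rule colourable_independent)
  then have "colourable (\<Union>x\<in>K. insert x (missing_only V E K x)) E (\<Sum>x\<in>K. 1)"
    by (rule colourable_UN[OF \<open>finite K\<close>])
  then show ?thesis by simp
qed

lemma real_choose_two_bound:
  "real ((w choose 2) * w + w) = (real w ^ 3 - real w ^ 2 + 2 * real w) / 2"
proof -
  have "even (w * (w - 1))" by (cases "even w") auto
  then have "real (2 * (w choose 2)) = real (w * (w - 1))"
    unfolding choose_two by simp
  also have "\<dots> = real w * (real w - 1)"
    by (cases w) (auto simp: algebra_simps)
  finally have c2: "2 * real (w choose 2) = real w * (real w - 1)"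
    by simp
  have "2 * real ((w choose 2) * w + w) = 2 * real (w choose 2) * real w + 2 * real w"
    by (simp add: algebra_simps)
  also have "\<dots> = real w ^ 3 - real w ^ 2 + 2 * real w"
    unfolding c2 by (simp add: algebra_simps power2_eq_square power3_eq_cube)
  finally show ?thesis by simp
qed

theorem corollary4p2:
  fixes V :: "'a set" and E :: "'a \<Rightarrow> 'a \<Rightarrow> bool"
  assumes "graph V E"
    and "\<forall>u\<in>V. \<forall>v\<in>V. E u v \<longrightarrow> perfect (non_nbrs V E u v) E"
  shows "real (chromatic_number V E)
    \<le> (real (clique_number V E) ^ 3 - real (clique_number V E) ^ 2
        + 2 * real (clique_number V E)) / 2"
proof -
  define w where "w = clique_number V E"
  obtain K where K: "is_clique V E K" "card K = w"
    using assms(1) clique_number_attained unfolding graph_def w_def by metis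
  have "colourable V E ((w choose 2) * w + w)"
    using colourable_Un[OF colourable_pair_non_nbrs[OF assms K(1)]
        colourable_missing_only_classes[OF assms(1) K(1) K(2)[unfolded w_def]]]
      vertices_covered[OF assms(1) K(1) K(2)[unfolded w_def]]
    unfolding K(2) w_def[symmetric] by (rule colourable_subset[OF _ _ order_refl])
  then have "real (chromatic_number V E) \<le> real ((w choose 2) * w + w)"
    by (subst of_nat_le_iff) (rule chromatic_number_le)
  then show ?thesis unfolding real_choose_two_bound w_def .
qed

end
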